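(* Let $\mathbb X$ be a Cornish space of type $F$ and $\mathbf A=E(\mathbb X)$. Then the lattice of congruences of $\mathbf A$ is dually isomorphic to the lattice $\mathrm{Sub}\,\mathbb X$ of topologically closed substructures of $\mathbb X$ (including the empty one). In particular, $\mathbf A$ is simple if and only if $\mathbb X$ has no non-empty proper closed substructures.
   Context: $F=F^+\,\dot\cup\,F^-$ is a set of unary operation symbols. A Cornish space of type $F$ is a Priestley space $\langle X;\le,\mathscr T\rangle$ with unary operations $f^{\mathbb X}$ ($f\in F$) that are continuous order-preserving for $f\in F^+$ and continuous order-reversing for $f\in F^-$. A closed substructure is a topologically closed subset closed under every $f^{\mathbb X}$. $E(\mathbb X)$ is the Cornish algebra on the set of continuous order-preserving maps $\alpha\colon\langle X;\le,\mathscr T\rangle\to\mathbbm 2$ (the discrete two-element chain), with pointwise lattice operations and bounds, and $f^{E(\mathbb X)}(\alpha)=\alpha\circ f^{\mathbb X}$ for $f\in F^+$, $f^{E(\mathbb X)}(\alpha)=c\circ\alpha\circ f^{\mathbb X}$ for $f\in F^-$, where $c$ is Boolean complement on $\{0,1\}$. *)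

theory Defs
  imports "HOL-Analysis.Analysis"
begin

definition up_set :: "'a topology \<Rightarrow> ('a \<Rightarrow> 'a \<Rightarrow> bool) \<Rightarrow> 'a set \<Rightarrow> bool" where
  "up_set T le U \<longleftrightarrow> U \<subseteq> topspace T \<and>
     (\<forall>a\<in>U. \<forall>b\<in>topspace T. le a b \<longrightarrow> b \<in> U)"

definition priestley_space :: "'a topology \<Rightarrow> ('a \<Rightarrow> 'a \<Rightarrow> bool) \<Rightarrow> bool" where
  "priestley_space T le \<longleftrightarrow>
     compact_space T \<and>
     (\<forall>x\<in>topspace T. le x x) \<and>
     (\<forall>x\<in>topspace T. \<forall>y\<in>topspace T. le x y \<and> le y x \<longrightarrow> x = y) \<and>
     (\<forall>x\<in>topspace T. \<forall>y\<in>topspace T. \<forall>z\<in>topspace T. le x y \<and> le y z \<longrightarrow> le x z) \<and>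
     (\<forall>x\<in>topspace T. \<forall>y\<in>topspace T. \<not> le x y \<longrightarrow>
        (\<exists>U. openin T U \<and> closedin T U \<and> up_set T le U \<and> x \<in> U \<and> y \<notin> U))"

text \<open>Cornish space of type F = Fp (disjoint union) Fm: the operation symbols f are
  interpreted by ops f.\<close>

definition cornish_space ::
  "'a topology \<Rightarrow> ('a \<Rightarrow> 'a \<Rightarrow> bool) \<Rightarrow> 'f set \<Rightarrow> 'f set \<Rightarrow> ('f \<Rightarrow> 'a \<Rightarrow> 'a) \<Rightarrow> bool" where
  "cornish_space T le Fp Fm ops \<longleftrightarrow>
     priestley_space T le \<and> Fp \<inter> Fm = {} \<and>
     (\<forall>f\<in>Fp \<union> Fm. continuous_map T T (ops f)) \<and>
     (\<forall>f\<in>Fp. \<forall>x\<in>topspace T. \<forall>y\<in>topspace T. le x y \<longrightarrow> le (ops f x) (ops f y)) \<and>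
     (\<forall>f\<in>Fm. \<forall>x\<in>topspace T. \<forall>y\<in>topspace T. le x y \<longrightarrow> le (ops f y) (ops f x))"

definition closed_subs ::
  "'a topology \<Rightarrow> 'f set \<Rightarrow> 'f set \<Rightarrow> ('f \<Rightarrow> 'a \<Rightarrow> 'a) \<Rightarrow> 'a set set" where
  "closed_subs T Fp Fm ops =
     {S. closedin T S \<and> (\<forall>f\<in>Fp \<union> Fm. \<forall>x\<in>S. ops f x \<in> S)}"

text \<open>The Cornish algebra E(X). A map alpha : X -> 2 is represented by a function
  'a => bool which is False outside the carrier X = topspace T (False = 0, True = 1).\<close>

definition E_carrier :: "'a topology \<Rightarrow> ('a \<Rightarrow> 'a \<Rightarrow> bool) \<Rightarrow> ('a \<Rightarrow> bool) set" where
  "E_carrier T le =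
     {\<alpha>. (\<forall>x. x \<notin> topspace T \<longrightarrow> \<not> \<alpha> x) \<and>
          continuous_map T (discrete_topology (UNIV :: bool set)) \<alpha> \<and>
          (\<forall>x\<in>topspace T. \<forall>y\<in>topspace T. le x y \<longrightarrow> \<alpha> x \<le> \<alpha> y)}"

definition E_join :: "('a \<Rightarrow> bool) \<Rightarrow> ('a \<Rightarrow> bool) \<Rightarrow> ('a \<Rightarrow> bool)" where
  "E_join \<alpha> \<beta> = (\<lambda>x. \<alpha> x \<or> \<beta> x)"

definition E_meet :: "('a \<Rightarrow> bool) \<Rightarrow> ('a \<Rightarrow> bool) \<Rightarrow> ('a \<Rightarrow> bool)" where
  "E_meet \<alpha> \<beta> = (\<lambda>x. \<alpha> x \<and> \<beta> x)"

definition E_bot :: "'a topology \<Rightarrow> ('a \<Rightarrow> bool)" where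
  "E_bot T = (\<lambda>x. False)"

definition E_top :: "'a topology \<Rightarrow> ('a \<Rightarrow> bool)" where
  "E_top T = (\<lambda>x. x \<in> topspace T)"

definition E_op ::
  "'a topology \<Rightarrow> 'f set \<Rightarrow> ('f \<Rightarrow> 'a \<Rightarrow> 'a) \<Rightarrow> 'f \<Rightarrow> ('a \<Rightarrow> bool) \<Rightarrow> ('a \<Rightarrow> bool)" where
  "E_op T Fp ops f \<alpha> =
     (\<lambda>x. x \<in> topspace T \<and> (if f \<in> Fp then \<alpha> (ops f x) else \<not> \<alpha> (ops f x)))"

text \<open>Congruences of an algebra with binary operations join, meet, constants (which are
  automatically respected) and unary operations indexed by Fs.\<close>

definition Con_alg ::
  "'b set \<Rightarrow> ('b \<Rightarrow> 'b \<Rightarrow> 'b) \<Rightarrow> ('b \<Rightarrow> 'b \<Rightarrow> 'b) \<Rightarrow> 'f set \<Rightarrow> ('f \<Rightarrow> 'b \<Rightarrow> 'b)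
     \<Rightarrow> ('b \<times> 'b) set set" where
  "Con_alg A j m Fs u =
     {\<theta>. equiv A \<theta> \<and>
        (\<forall>a b c d. (a, b) \<in> \<theta> \<and> (c, d) \<in> \<theta> \<longrightarrow> (j a c, j b d) \<in> \<theta> \<and> (m a c, m b d) \<in> \<theta>) \<and>
        (\<forall>f\<in>Fs. \<forall>a b. (a, b) \<in> \<theta> \<longrightarrow> (u f a, u f b) \<in> \<theta>)}"

definition E_Con ::
  "'a topology \<Rightarrow> ('a \<Rightarrow> 'a \<Rightarrow> bool) \<Rightarrow> 'f set \<Rightarrow> 'f set \<Rightarrow> ('f \<Rightarrow> 'a \<Rightarrow> 'a)
     \<Rightarrow> (('a \<Rightarrow> bool) \<times> ('a \<Rightarrow> bool)) set set" where
  "E_Con T le Fp Fm ops = Con_alg (E_carrier T le) E_join E_meet (Fp \<union> Fm) (E_op T Fp ops)"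

definition E_simple ::
  "'a topology \<Rightarrow> ('a \<Rightarrow> 'a \<Rightarrow> bool) \<Rightarrow> 'f set \<Rightarrow> 'f set \<Rightarrow> ('f \<Rightarrow> 'a \<Rightarrow> 'a) \<Rightarrow> bool" where
  "E_simple T le Fp Fm ops \<longleftrightarrow>
     E_Con T le Fp Fm ops = {Id_on (E_carrier T le), E_carrier T le \<times> E_carrier T le}"

end

theory Submission
  imports Defs
begin

text \<open>
  The elements of E(X) are the characteristic maps of the clopen up-sets of X. A congruence
  \<theta> determines the closed substructure of points at which all \<theta>-related maps agree, and a
  closed substructure Y determines the congruence "agree on Y"; both assignments are antitone,
  so it suffices that they are mutually inverse. Going from Y and back returns Y because,
  by Priestley separation and compactness, for x outside the closed set Y there are clopen
  up-sets V \<subseteq> U that agree on Y but differ at x. Going from \<theta> and back returns \<theta>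
  because the (compact) disagreement set of a pair agreeing on the points fixed by \<theta> is
  covered by the disagreement sets of finitely many pairs in \<theta>, and a lattice congruence
  identifies p \<le> q once finitely many of its pairs jointly disagree everywhere between p and q.
  Simplicity corresponds to Sub X = {{}, X} since agreement on X is the identity and agreement
  on {} the full relation.
\<close>

lemma cornish_space_ops_topspace:
  "cornish_space T le Fp Fm ops \<Longrightarrow> f \<in> Fp \<union> Fm \<Longrightarrow> x \<in> topspace T \<Longrightarrow> ops f x \<in> topspace T"
  unfolding cornish_space_def by (meson continuous_map_image_subset_topspace image_subset_iff)

lemma priestley_antisym:
  "priestley_space T le \<Longrightarrow> x \<in> topspace T \<Longrightarrow> y \<in> topspace T \<Longrightarrow> le x y \<Longrightarrow> le y x \<Longrightarrow> x = y"
  unfolding priestley_space_def by blast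

definition clopen_up_set :: "'a topology \<Rightarrow> ('a \<Rightarrow> 'a \<Rightarrow> bool) \<Rightarrow> 'a set \<Rightarrow> bool" where
  "clopen_up_set T le U \<longleftrightarrow> openin T U \<and> closedin T U \<and> up_set T le U"

lemma priestley_separation:
  assumes "priestley_space T le" "x \<in> topspace T" "y \<in> topspace T" "\<not> le x y"
  obtains U where "clopen_up_set T le U" "x \<in> U" "y \<notin> U"
  using assms unfolding priestley_space_def clopen_up_set_def by metis

lemma clopen_up_set_empty: "clopen_up_set T le {}"
  by (simp add: clopen_up_set_def up_set_def)

lemma clopen_up_set_topspace: "clopen_up_set T le (topspace T)"
  by (simp add: clopen_up_set_def up_set_def)

lemma clopen_up_set_Un:
  "clopen_up_set T le U \<Longrightarrow> clopen_up_set T le V \<Longrightarrow> clopen_up_set T le (U \<union> V)"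
  by (auto simp: clopen_up_set_def up_set_def)

lemma clopen_up_set_Int:
  "clopen_up_set T le U \<Longrightarrow> clopen_up_set T le V \<Longrightarrow> clopen_up_set T le (U \<inter> V)"
  by (auto simp: clopen_up_set_def up_set_def)

lemma clopen_up_set_Union:
  "finite \<U> \<Longrightarrow> (\<And>U. U \<in> \<U> \<Longrightarrow> clopen_up_set T le U) \<Longrightarrow> clopen_up_set T le (\<Union>\<U>)"
  by (induction \<U> rule: finite_induct) (auto intro: clopen_up_set_empty clopen_up_set_Un)

lemma clopen_up_set_Inter:
  "finite \<U> \<Longrightarrow> (\<And>U. U \<in> \<U> \<Longrightarrow> clopen_up_set T le U)
     \<Longrightarrow> clopen_up_set T le (topspace T \<inter> \<Inter>\<U>)"
proof (induction \<U> rule: finite_induct)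
  case (insert U \<U>)
  then have "topspace T \<inter> \<Inter>(insert U \<U>) = U \<inter> (topspace T \<inter> \<Inter>\<U>)" by auto
  with insert show ?case by (simp add: clopen_up_set_Int)
qed (simp add: clopen_up_set_topspace)

lemma priestley_finite_cover_avoiding:
  assumes T: "priestley_space T le" and Y: "closedin T Y"
    and x: "x \<in> topspace T" "x \<notin> Y"
  obtains Ups Dns where "finite Ups" "finite Dns"
    "\<forall>W\<in>Ups. clopen_up_set T le W \<and> x \<notin> W" "\<forall>W\<in>Dns. clopen_up_set T le W \<and> x \<in> W"
    "Y \<subseteq> \<Union>Ups \<union> (\<Union>W\<in>Dns. topspace T - W)"
proof -
  let ?Ups = "{W. clopen_up_set T le W \<and> x \<notin> W}"
  let ?Dns = "{W. clopen_up_set T le W \<and> x \<in> W}"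
  have "Y \<subseteq> \<Union>(?Ups \<union> (\<lambda>W. topspace T - W) ` ?Dns)"
  proof
    fix y assume y: "y \<in> Y"
    then have "y \<in> topspace T" "y \<noteq> x" using Y x closedin_subset by auto
    then have "\<not> le x y \<or> \<not> le y x" using priestley_antisym[OF T x(1)] by blast
    then show "y \<in> \<Union>(?Ups \<union> (\<lambda>W. topspace T - W) ` ?Dns)"
    proof
      assume "\<not> le x y"
      then obtain W where "clopen_up_set T le W" "x \<in> W" "y \<notin> W"
        using priestley_separation T x(1) \<open>y \<in> topspace T\<close> by metis
      with \<open>y \<in> topspace T\<close> show ?thesis by blast
    next
      assume "\<not> le y x"
      then obtain W where "clopen_up_set T le W" "y \<in> W" "x \<notin> W"
        using priestley_separation T x(1) \<open>y \<in> topspace T\<close> by metis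
      then show ?thesis by blast
    qed
  qed
  moreover have "\<forall>W \<in> ?Ups \<union> (\<lambda>W. topspace T - W) ` ?Dns. openin T W"
    by (auto simp: clopen_up_set_def)
  moreover have "compactin T Y"
    using T Y closedin_compact_space by (auto simp: priestley_space_def)
  ultimately obtain \<F> where \<F>: "finite \<F>" "\<F> \<subseteq> ?Ups \<union> (\<lambda>W. topspace T - W) ` ?Dns" "Y \<subseteq> \<Union>\<F>"
    unfolding compactin_def by (metis (no_types, lifting))
  have "finite (\<F> - ?Ups)" "\<F> - ?Ups \<subseteq> (\<lambda>W. topspace T - W) ` ?Dns"
    using \<F>(1,2) by auto
  then obtain Dns where Dns: "Dns \<subseteq> ?Dns" "finite Dns" "\<F> - ?Ups = (\<lambda>W. topspace T - W) ` Dns"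
    by (meson finite_subset_image)
  have "\<Union>\<F> = \<Union>(\<F> \<inter> ?Ups) \<union> \<Union>(\<F> - ?Ups)"
    by blast
  then have "Y \<subseteq> \<Union>(\<F> \<inter> ?Ups) \<union> (\<Union>W\<in>Dns. topspace T - W)"
    using \<F>(3) Dns(3) by simp
  moreover have "finite (\<F> \<inter> ?Ups)"
    using \<F>(1) by simp
  ultimately show thesis
    using that[of "\<F> \<inter> ?Ups" Dns] Dns(1,2) by blast
qed

lemma priestley_separation_closed:
  assumes T: "priestley_space T le" and Y: "closedin T Y"
    and x: "x \<in> topspace T" "x \<notin> Y"
  obtains U V where "clopen_up_set T le U" "clopen_up_set T le V"
    "V \<subseteq> U" "x \<in> U" "x \<notin> V" "Y \<inter> U \<subseteq> V"
proof -
  obtain Ups Dns where fin: "finite Ups" "finite Dns"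
    and Ups: "\<forall>W\<in>Ups. clopen_up_set T le W \<and> x \<notin> W"
    and Dns: "\<forall>W\<in>Dns. clopen_up_set T le W \<and> x \<in> W"
    and cover: "Y \<subseteq> \<Union>Ups \<union> (\<Union>W\<in>Dns. topspace T - W)"
    using priestley_finite_cover_avoiding[OF assms] .
  define U where "U = topspace T \<inter> \<Inter>Dns"
  have "clopen_up_set T le U"
    unfolding U_def using fin Dns by (intro clopen_up_set_Inter) auto
  moreover have "clopen_up_set T le (U \<inter> \<Union>Ups)"
    using fin Ups by (intro clopen_up_set_Int clopen_up_set_Union \<open>clopen_up_set T le U\<close>) auto
  moreover have "x \<in> U" "x \<notin> U \<inter> \<Union>Ups"
    using x(1) Ups Dns by (auto simp: U_def)
  moreover have "Y \<inter> U \<subseteq> U \<inter> \<Union>Ups"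
    using cover by (auto simp: U_def)
  ultimately show thesis
    using that by blast
qed

lemma E_carrier_iff:
  "\<alpha> \<in> E_carrier T le \<longleftrightarrow> (\<exists>U. clopen_up_set T le U \<and> \<alpha> = (\<lambda>x. x \<in> U))"
proof
  assume \<alpha>: "\<alpha> \<in> E_carrier T le"
  define U where "U = {x. \<alpha> x}"
  have U: "U \<subseteq> topspace T" "{x \<in> topspace T. \<alpha> x \<in> {True}} = U"
    "{x \<in> topspace T. \<alpha> x \<in> {False}} = topspace T - U"
    using \<alpha> by (auto simp: U_def E_carrier_def)
  have "continuous_map T (discrete_topology UNIV) \<alpha>"
    using \<alpha> by (simp add: E_carrier_def)
  then have "openin T U" "openin T (topspace T - U)"
    unfolding continuous_map_def by (metis U(2,3) openin_discrete_topology subset_UNIV)+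
  then have "clopen_up_set T le U"
    using \<alpha> U(1) by (auto simp: clopen_up_set_def closedin_def up_set_def E_carrier_def U_def)
  then show "\<exists>U. clopen_up_set T le U \<and> \<alpha> = (\<lambda>x. x \<in> U)"
    by (auto simp: U_def)
next
  assume "\<exists>U. clopen_up_set T le U \<and> \<alpha> = (\<lambda>x. x \<in> U)"
  then obtain U where U: "openin T U" "closedin T U" "up_set T le U" and \<alpha>: "\<alpha> = (\<lambda>x. x \<in> U)"
    by (auto simp: clopen_up_set_def)
  have level_open: "openin T {x \<in> topspace T. x \<in> U \<longleftrightarrow> b}" for b
  proof -
    have "{x \<in> topspace T. x \<in> U \<longleftrightarrow> b} = (if b then U else topspace T - U)"
      using openin_subset[OF U(1)] by auto
    with U show ?thesis by (simp add: closedin_def)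
  qed
  have "openin T {x \<in> topspace T. \<alpha> x \<in> W}" for W
  proof -
    have "{x \<in> topspace T. \<alpha> x \<in> W} = (\<Union>b\<in>W. {x \<in> topspace T. x \<in> U \<longleftrightarrow> b})"
      by (auto simp: \<alpha>)
    then show ?thesis using level_open by auto
  qed
  with U show "\<alpha> \<in> E_carrier T le"
    by (auto simp: E_carrier_def \<alpha> continuous_map_def up_set_def dest: openin_subset)
qed

lemma E_carrier_topspace: "\<alpha> \<in> E_carrier T le \<Longrightarrow> \<alpha> x \<Longrightarrow> x \<in> topspace T"
  by (auto simp: E_carrier_def)

lemma E_carrier_eqI:
  assumes "\<alpha> \<in> E_carrier T le" "\<beta> \<in> E_carrier T le" "\<forall>x\<in>topspace T. \<alpha> x = \<beta> x"
  shows "\<alpha> = \<beta>"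
proof
  fix x
  show "\<alpha> x = \<beta> x"
    using assms E_carrier_topspace[of \<alpha> T le x] E_carrier_topspace[of \<beta> T le x] by blast
qed

lemma E_join_mem:
  assumes "\<alpha> \<in> E_carrier T le" "\<beta> \<in> E_carrier T le"
  shows "E_join \<alpha> \<beta> \<in> E_carrier T le"
proof -
  obtain U V where "clopen_up_set T le U" "clopen_up_set T le V" "\<alpha> = (\<lambda>x. x \<in> U)" "\<beta> = (\<lambda>x. x \<in> V)"
    using assms unfolding E_carrier_iff by blast
  then show ?thesis
    unfolding E_carrier_iff E_join_def by (intro exI[of _ "U \<union> V"]) (simp add: clopen_up_set_Un)
qed

lemma E_meet_mem:
  assumes "\<alpha> \<in> E_carrier T le" "\<beta> \<in> E_carrier T le"
  shows "E_meet \<alpha> \<beta> \<in> E_carrier T le"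
proof -
  obtain U V where "clopen_up_set T le U" "clopen_up_set T le V" "\<alpha> = (\<lambda>x. x \<in> U)" "\<beta> = (\<lambda>x. x \<in> V)"
    using assms unfolding E_carrier_iff by blast
  then show ?thesis
    unfolding E_carrier_iff E_meet_def by (intro exI[of _ "U \<inter> V"]) (simp add: clopen_up_set_Int)
qed

lemma E_op_mem:
  assumes cs: "cornish_space T le Fp Fm ops" and f: "f \<in> Fp \<union> Fm" and \<alpha>: "\<alpha> \<in> E_carrier T le"
  shows "E_op T Fp ops f \<alpha> \<in> E_carrier T le"
proof -
  obtain U where U: "clopen_up_set T le U" and \<alpha>_eq: "\<alpha> = (\<lambda>x. x \<in> U)"
    using \<alpha> by (auto simp: E_carrier_iff)
  have cont: "continuous_map T T (ops f)"
    using cs f by (simp add: cornish_space_def)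
  define P where "P = {x \<in> topspace T. ops f x \<in> U}"
  have P: "openin T P" "closedin T P"
    using U cont openin_continuous_map_preimage closedin_continuous_map_preimage
    by (auto simp: P_def clopen_up_set_def)
  show ?thesis
  proof (cases "f \<in> Fp")
    case True
    then have "up_set T le P"
      using cs U cornish_space_ops_topspace[OF cs f]
      by (simp add: P_def up_set_def clopen_up_set_def cornish_space_def) blast
    with P True show ?thesis
      unfolding E_carrier_iff
      by (intro exI[of _ P]) (auto simp: clopen_up_set_def E_op_def \<alpha>_eq P_def)
  next
    case False
    then have "f \<in> Fm" using f by blast
    then have "up_set T le (topspace T - P)"
      using cs U cornish_space_ops_topspace[OF cs f]
      by (simp add: P_def up_set_def clopen_up_set_def cornish_space_def) blast
    with P False show ?thesis
      unfolding E_carrier_iff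
      by (intro exI[of _ "topspace T - P"])
        (auto simp: clopen_up_set_def E_op_def \<alpha>_eq P_def closedin_diff openin_diff)
  qed
qed

definition disagreement_set :: "'a topology \<Rightarrow> ('a \<Rightarrow> bool) \<Rightarrow> ('a \<Rightarrow> bool) \<Rightarrow> 'a set" where
  "disagreement_set T \<alpha> \<beta> = {x \<in> topspace T. \<alpha> x \<noteq> \<beta> x}"

lemma E_disagreement_set_clopen:
  assumes "\<alpha> \<in> E_carrier T le" "\<beta> \<in> E_carrier T le"
  shows "openin T (disagreement_set T \<alpha> \<beta>)" "closedin T (disagreement_set T \<alpha> \<beta>)"
proof -
  obtain U V where U: "openin T U" "closedin T U" and V: "openin T V" "closedin T V"
    and eq: "\<alpha> = (\<lambda>x. x \<in> U)" "\<beta> = (\<lambda>x. x \<in> V)"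
    using assms by (auto simp: E_carrier_iff clopen_up_set_def)
  have "disagreement_set T \<alpha> \<beta> = (U - V) \<union> (V - U)"
    using U V by (auto simp: disagreement_set_def eq dest: openin_subset)
  with U V show "openin T (disagreement_set T \<alpha> \<beta>)" "closedin T (disagreement_set T \<alpha> \<beta>)"
    by (simp_all add: openin_diff closedin_diff openin_Un closedin_Un)
qed

lemma Con_alg_equiv: "\<theta> \<in> Con_alg A j m Fs u \<Longrightarrow> equiv A \<theta>"
  by (simp add: Con_alg_def)

lemma Con_alg_memD: "\<theta> \<in> Con_alg A j m Fs u \<Longrightarrow> (a, b) \<in> \<theta> \<Longrightarrow> a \<in> A \<and> b \<in> A"
  using equiv_type[OF Con_alg_equiv] by blast

lemma Con_alg_refl: "\<theta> \<in> Con_alg A j m Fs u \<Longrightarrow> a \<in> A \<Longrightarrow> (a, a) \<in> \<theta>"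
  by (metis Con_alg_equiv equivE refl_onD)

lemma Con_alg_sym: "\<theta> \<in> Con_alg A j m Fs u \<Longrightarrow> (a, b) \<in> \<theta> \<Longrightarrow> (b, a) \<in> \<theta>"
  by (metis Con_alg_equiv equivE symD)

lemma Con_alg_trans: "\<theta> \<in> Con_alg A j m Fs u \<Longrightarrow> (a, b) \<in> \<theta> \<Longrightarrow> (b, c) \<in> \<theta> \<Longrightarrow> (a, c) \<in> \<theta>"
  by (metis Con_alg_equiv equivE transD)

lemma Con_alg_join: "\<theta> \<in> Con_alg A j m Fs u \<Longrightarrow> (a, b) \<in> \<theta> \<Longrightarrow> (c, d) \<in> \<theta> \<Longrightarrow> (j a c, j b d) \<in> \<theta>"
  by (simp add: Con_alg_def)

lemma Con_alg_meet: "\<theta> \<in> Con_alg A j m Fs u \<Longrightarrow> (a, b) \<in> \<theta> \<Longrightarrow> (c, d) \<in> \<theta> \<Longrightarrow> (m a c, m b d) \<in> \<theta>"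
  by (simp add: Con_alg_def)

lemma Con_alg_op: "\<theta> \<in> Con_alg A j m Fs u \<Longrightarrow> f \<in> Fs \<Longrightarrow> (a, b) \<in> \<theta> \<Longrightarrow> (u f a, u f b) \<in> \<theta>"
  by (simp add: Con_alg_def)

lemma Con_alg_mem_if_gap_covered:
  fixes \<theta> :: "(('a \<Rightarrow> bool) \<times> ('a \<Rightarrow> bool)) set"
  assumes \<theta>: "\<theta> \<in> Con_alg A E_join E_meet Fs u"
    and "finite P" "P \<subseteq> \<theta>" "p \<in> A" "q \<in> A" "\<forall>x. p x \<longrightarrow> q x"
    and "\<forall>x. q x \<and> \<not> p x \<longrightarrow> (\<exists>(\<gamma>, \<delta>)\<in>P. \<gamma> x \<noteq> \<delta> x)"
  shows "(p, q) \<in> \<theta>"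
  using assms(2-)
proof (induction P arbitrary: p q rule: finite_induct)
  case empty
  then have "p = q" by blast
  with empty show ?case using Con_alg_refl[OF \<theta>] by simp
next
  case (insert r P)
  obtain \<gamma> \<delta> where r: "r = (\<gamma>, \<delta>)" by fastforce
  have \<gamma>\<delta>: "(\<gamma>, \<delta>) \<in> \<theta>" using insert.prems(1) r by blast
  have \<delta>\<delta>: "(\<delta>, \<delta>) \<in> \<theta>"
    using Con_alg_refl[OF \<theta>] Con_alg_memD[OF \<theta> \<gamma>\<delta>] by blast
  have "E_meet \<delta> \<delta> = \<delta>" "E_join \<delta> \<delta> = \<delta>"
    by (simp_all add: E_meet_def E_join_def)
  then have "(E_meet \<gamma> \<delta>, \<delta>) \<in> \<theta>" "(E_join \<gamma> \<delta>, \<delta>) \<in> \<theta>"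
    using Con_alg_meet[OF \<theta> \<gamma>\<delta> \<delta>\<delta>] Con_alg_join[OF \<theta> \<gamma>\<delta> \<delta>\<delta>] by simp_all
  then have meet_join: "(E_meet \<gamma> \<delta>, E_join \<gamma> \<delta>) \<in> \<theta>"
    by (metis Con_alg_sym Con_alg_trans \<theta>)
  \<comment> \<open>p \<le> r' \<le> s' \<le> q with (r', s') \<in> \<theta>; the two outer gaps lie where \<gamma> = \<delta>,
    so the smaller family P covers them.\<close>
  define r' where "r' = E_meet q (E_join p (E_meet \<gamma> \<delta>))"
  define s' where "s' = E_meet q (E_join p (E_join \<gamma> \<delta>))"
  have r's': "(r', s') \<in> \<theta>"
    unfolding r'_def s'_def
    by (intro Con_alg_meet[OF \<theta>] Con_alg_join[OF \<theta>] Con_alg_refl[OF \<theta>] insert.prems meet_join)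
  have "(p, r') \<in> \<theta>"
  proof (rule insert.IH)
    show "\<forall>x. r' x \<and> \<not> p x \<longrightarrow> (\<exists>(\<gamma>, \<delta>)\<in>P. \<gamma> x \<noteq> \<delta> x)"
      using insert.prems(5) r by (auto simp: r'_def E_meet_def E_join_def)
  qed (use insert.prems Con_alg_memD[OF \<theta> r's'] in \<open>auto simp: r'_def E_meet_def E_join_def\<close>)
  moreover have "(s', q) \<in> \<theta>"
  proof (rule insert.IH)
    show "\<forall>x. q x \<and> \<not> s' x \<longrightarrow> (\<exists>(\<gamma>, \<delta>)\<in>P. \<gamma> x \<noteq> \<delta> x)"
      using insert.prems(5) r by (auto simp: s'_def E_meet_def E_join_def)
  qed (use insert.prems Con_alg_memD[OF \<theta> r's'] in \<open>auto simp: s'_def E_meet_def E_join_def\<close>)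
  ultimately show ?case
    using r's' by (metis Con_alg_trans \<theta>)
qed

definition agreement_con ::
  "'a topology \<Rightarrow> ('a \<Rightarrow> 'a \<Rightarrow> bool) \<Rightarrow> 'a set \<Rightarrow> (('a \<Rightarrow> bool) \<times> ('a \<Rightarrow> bool)) set" where
  "agreement_con T le Y = {(\<alpha>, \<beta>) \<in> E_carrier T le \<times> E_carrier T le. \<forall>y\<in>Y. \<alpha> y = \<beta> y}"

definition agreement_set :: "'a topology \<Rightarrow> (('a \<Rightarrow> bool) \<times> ('a \<Rightarrow> bool)) set \<Rightarrow> 'a set" where
  "agreement_set T \<theta> = {x \<in> topspace T. \<forall>\<alpha> \<beta>. (\<alpha>, \<beta>) \<in> \<theta> \<longrightarrow> \<alpha> x = \<beta> x}"

lemma agreement_con_antimono: "Y \<subseteq> Z \<Longrightarrow> agreement_con T le Z \<subseteq> agreement_con T le Y"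
  by (auto simp: agreement_con_def)

lemma agreement_set_antimono: "\<theta> \<subseteq> \<psi> \<Longrightarrow> agreement_set T \<psi> \<subseteq> agreement_set T \<theta>"
  by (auto simp: agreement_set_def)

lemma agreement_con_empty: "agreement_con T le {} = E_carrier T le \<times> E_carrier T le"
  by (auto simp: agreement_con_def)

lemma agreement_con_topspace: "agreement_con T le (topspace T) = Id_on (E_carrier T le)"
  by (auto simp: agreement_con_def Id_on_def intro: E_carrier_eqI)

lemma agreement_con_in_E_Con:
  assumes cs: "cornish_space T le Fp Fm ops" and Y: "\<forall>f\<in>Fp \<union> Fm. \<forall>y\<in>Y. ops f y \<in> Y"
  shows "agreement_con T le Y \<in> E_Con T le Fp Fm ops"
proof -
  have "equiv (E_carrier T le) (agreement_con T le Y)"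
    by (auto simp: agreement_con_def equiv_def refl_on_def sym_def trans_def)
  moreover have "(E_op T Fp ops f \<alpha>, E_op T Fp ops f \<beta>) \<in> agreement_con T le Y"
    if "f \<in> Fp \<union> Fm" "(\<alpha>, \<beta>) \<in> agreement_con T le Y" for f \<alpha> \<beta>
    using that Y E_op_mem[OF cs] by (auto simp: agreement_con_def E_op_def)
  ultimately show ?thesis
    by (auto simp: E_Con_def Con_alg_def agreement_con_def E_join_def E_meet_def
        intro: E_join_mem[unfolded E_join_def] E_meet_mem[unfolded E_meet_def])
qed

lemma agreement_set_in_closed_subs:
  assumes cs: "cornish_space T le Fp Fm ops" and \<theta>: "\<theta> \<in> E_Con T le Fp Fm ops"
  shows "agreement_set T \<theta> \<in> closed_subs T Fp Fm ops"
proof -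
  have \<theta>_Con: "\<theta> \<in> Con_alg (E_carrier T le) E_join E_meet (Fp \<union> Fm) (E_op T Fp ops)"
    using \<theta> by (simp add: E_Con_def)
  have "openin T (disagreement_set T \<alpha> \<beta>)" if "(\<alpha>, \<beta>) \<in> \<theta>" for \<alpha> \<beta>
    using Con_alg_memD[OF \<theta>_Con that] E_disagreement_set_clopen(1) by blast
  then have "openin T (\<Union>(\<alpha>, \<beta>)\<in>\<theta>. disagreement_set T \<alpha> \<beta>)"
    by (intro openin_Union) auto
  moreover have "agreement_set T \<theta> = topspace T - (\<Union>(\<alpha>, \<beta>)\<in>\<theta>. disagreement_set T \<alpha> \<beta>)"
    by (auto simp: agreement_set_def disagreement_set_def)
  ultimately have closed: "closedin T (agreement_set T \<theta>)"
    by (simp add: closedin_diff)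
  have "ops f x \<in> agreement_set T \<theta>" if f: "f \<in> Fp \<union> Fm" and x: "x \<in> agreement_set T \<theta>" for f x
  proof -
    have x_agree: "x \<in> topspace T" "\<forall>\<alpha> \<beta>. (\<alpha>, \<beta>) \<in> \<theta> \<longrightarrow> \<alpha> x = \<beta> x"
      using x by (simp_all add: agreement_set_def)
    have "\<alpha> (ops f x) = \<beta> (ops f x)" if "(\<alpha>, \<beta>) \<in> \<theta>" for \<alpha> \<beta>
    proof -
      have "E_op T Fp ops f \<alpha> x = E_op T Fp ops f \<beta> x"
        using x_agree(2) Con_alg_op[OF \<theta>_Con f that] by blast
      with x_agree(1) show ?thesis
        by (cases "f \<in> Fp") (simp_all add: E_op_def)
    qed
    with cornish_space_ops_topspace[OF cs f x_agree(1)] show ?thesis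
      by (simp add: agreement_set_def)
  qed
  with closed show ?thesis
    by (simp add: closed_subs_def)
qed

lemma agreement_con_agreement_set:
  assumes T: "compact_space T" and \<theta>: "\<theta> \<in> E_Con T le Fp Fm ops"
  shows "agreement_con T le (agreement_set T \<theta>) = \<theta>"
proof
  have \<theta>_Con: "\<theta> \<in> Con_alg (E_carrier T le) E_join E_meet (Fp \<union> Fm) (E_op T Fp ops)"
    using \<theta> by (simp add: E_Con_def)
  show "\<theta> \<subseteq> agreement_con T le (agreement_set T \<theta>)"
    using Con_alg_memD[OF \<theta>_Con] by (auto simp: agreement_con_def agreement_set_def)
  show "agreement_con T le (agreement_set T \<theta>) \<subseteq> \<theta>"
  proof clarify
    fix \<alpha> \<beta> assume "(\<alpha>, \<beta>) \<in> agreement_con T le (agreement_set T \<theta>)"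
    then have \<alpha>: "\<alpha> \<in> E_carrier T le" and \<beta>: "\<beta> \<in> E_carrier T le"
      and agree: "\<forall>x\<in>agreement_set T \<theta>. \<alpha> x = \<beta> x"
      by (auto simp: agreement_con_def)
    let ?D = "case_prod (disagreement_set T)"
    have "compactin T (disagreement_set T \<alpha> \<beta>)"
      using closedin_compact_space[OF T E_disagreement_set_clopen(2)[OF \<alpha> \<beta>]] .
    moreover have "\<forall>U\<in>?D ` \<theta>. openin T U"
    proof clarify
      fix \<gamma> \<delta> assume "(\<gamma>, \<delta>) \<in> \<theta>"
      then show "openin T (disagreement_set T \<gamma> \<delta>)"
        using Con_alg_memD[OF \<theta>_Con] E_disagreement_set_clopen(1) by blast
    qed
    moreover have "disagreement_set T \<alpha> \<beta> \<subseteq> \<Union>(?D ` \<theta>)"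
    proof
      fix x assume x: "x \<in> disagreement_set T \<alpha> \<beta>"
      then have "x \<notin> agreement_set T \<theta>" "x \<in> topspace T"
        using agree by (auto simp: disagreement_set_def)
      then obtain \<gamma> \<delta> where "(\<gamma>, \<delta>) \<in> \<theta>" "\<gamma> x \<noteq> \<delta> x"
        by (auto simp: agreement_set_def)
      with \<open>x \<in> topspace T\<close> show "x \<in> \<Union>(?D ` \<theta>)"
        by (intro UN_I[of "(\<gamma>, \<delta>)"]) (simp_all add: disagreement_set_def)
    qed
    ultimately obtain \<F> where \<F>: "finite \<F>" "\<F> \<subseteq> ?D ` \<theta>" "disagreement_set T \<alpha> \<beta> \<subseteq> \<Union>\<F>"
      unfolding compactin_def by (metis (no_types, lifting))
    then obtain P where P: "finite P" "P \<subseteq> \<theta>" "\<F> = ?D ` P"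
      by (meson finite_subset_image)
    have "(E_meet \<alpha> \<beta>, E_join \<alpha> \<beta>) \<in> \<theta>"
    proof (rule Con_alg_mem_if_gap_covered[OF \<theta>_Con P(1,2)])
      show "E_meet \<alpha> \<beta> \<in> E_carrier T le" "E_join \<alpha> \<beta> \<in> E_carrier T le"
        using \<alpha> \<beta> by (simp_all add: E_meet_mem E_join_mem)
      show "\<forall>x. E_meet \<alpha> \<beta> x \<longrightarrow> E_join \<alpha> \<beta> x"
        by (simp add: E_meet_def E_join_def)
      show "\<forall>x. E_join \<alpha> \<beta> x \<and> \<not> E_meet \<alpha> \<beta> x \<longrightarrow> (\<exists>(\<gamma>, \<delta>)\<in>P. \<gamma> x \<noteq> \<delta> x)"
      proof clarify
        fix x assume x: "E_join \<alpha> \<beta> x" "\<not> E_meet \<alpha> \<beta> x"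
        then have "x \<in> disagreement_set T \<alpha> \<beta>"
          using E_carrier_topspace[OF \<alpha>] E_carrier_topspace[OF \<beta>]
          by (auto simp: disagreement_set_def E_meet_def E_join_def)
        then obtain \<gamma> \<delta> where "(\<gamma>, \<delta>) \<in> P" "x \<in> disagreement_set T \<gamma> \<delta>"
          using \<F>(3) P(3) by auto
        then show "\<exists>(\<gamma>, \<delta>)\<in>P. \<gamma> x \<noteq> \<delta> x"
          by (auto simp: disagreement_set_def)
      qed
    qed
    moreover have "E_meet \<alpha> (E_meet \<alpha> \<beta>) = E_meet \<alpha> \<beta>" "E_meet \<alpha> (E_join \<alpha> \<beta>) = \<alpha>"
      "E_meet \<beta> (E_meet \<alpha> \<beta>) = E_meet \<alpha> \<beta>" "E_meet \<beta> (E_join \<alpha> \<beta>) = \<beta>"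
      by (auto simp: E_meet_def E_join_def)
    ultimately have "(E_meet \<alpha> \<beta>, \<alpha>) \<in> \<theta>" "(E_meet \<alpha> \<beta>, \<beta>) \<in> \<theta>"
      using Con_alg_meet[OF \<theta>_Con Con_alg_refl[OF \<theta>_Con \<alpha>]]
        Con_alg_meet[OF \<theta>_Con Con_alg_refl[OF \<theta>_Con \<beta>]] by metis+
    then show "(\<alpha>, \<beta>) \<in> \<theta>"
      by (metis Con_alg_sym Con_alg_trans \<theta>_Con)
  qed
qed

lemma agreement_set_agreement_con:
  assumes T: "priestley_space T le" and Y: "closedin T Y"
  shows "agreement_set T (agreement_con T le Y) = Y"
proof
  show "Y \<subseteq> agreement_set T (agreement_con T le Y)"
    using closedin_subset[OF Y] by (auto simp: agreement_set_def agreement_con_def)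
  show "agreement_set T (agreement_con T le Y) \<subseteq> Y"
  proof
    fix x assume x: "x \<in> agreement_set T (agreement_con T le Y)"
    show "x \<in> Y"
    proof (rule ccontr)
      assume "x \<notin> Y"
      moreover have "x \<in> topspace T" using x by (simp add: agreement_set_def)
      ultimately obtain U V where "clopen_up_set T le U" "clopen_up_set T le V"
        "V \<subseteq> U" "x \<in> U" "x \<notin> V" "Y \<inter> U \<subseteq> V"
        using priestley_separation_closed[OF T Y] by metis
      then have "((\<lambda>z. z \<in> U), (\<lambda>z. z \<in> V)) \<in> agreement_con T le Y"
        by (auto simp: agreement_con_def E_carrier_iff)
      with x \<open>x \<in> U\<close> \<open>x \<notin> V\<close> show False
        by (auto simp: agreement_set_def)
    qed
  qed
qed

lemma agreement_bij_betw:
  assumes cs: "cornish_space T le Fp Fm ops"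
  shows "bij_betw (agreement_set T) (E_Con T le Fp Fm ops) (closed_subs T Fp Fm ops)"
    and "bij_betw (agreement_con T le) (closed_subs T Fp Fm ops) (E_Con T le Fp Fm ops)"
proof -
  have T: "priestley_space T le"
    using cs by (simp add: cornish_space_def)
  then have "compact_space T"
    by (simp add: priestley_space_def)
  then have "\<forall>\<theta>\<in>E_Con T le Fp Fm ops. agreement_con T le (agreement_set T \<theta>) = \<theta>"
    using agreement_con_agreement_set by blast
  moreover have "\<forall>Y\<in>closed_subs T Fp Fm ops. agreement_set T (agreement_con T le Y) = Y"
    using agreement_set_agreement_con[OF T] by (simp add: closed_subs_def)
  moreover have "agreement_set T ` E_Con T le Fp Fm ops \<subseteq> closed_subs T Fp Fm ops"
    using agreement_set_in_closed_subs[OF cs] by blast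
  moreover have "agreement_con T le ` closed_subs T Fp Fm ops \<subseteq> E_Con T le Fp Fm ops"
    using agreement_con_in_E_Con[OF cs] by (auto simp: closed_subs_def)
  ultimately show "bij_betw (agreement_set T) (E_Con T le Fp Fm ops) (closed_subs T Fp Fm ops)"
    and "bij_betw (agreement_con T le) (closed_subs T Fp Fm ops) (E_Con T le Fp Fm ops)"
    by (simp_all add: bij_betw_byWitness)
qed

theorem lemma5p5:
  fixes T :: "'a topology" and le :: "'a \<Rightarrow> 'a \<Rightarrow> bool"
    and Fp Fm :: "'f set" and ops :: "'f \<Rightarrow> 'a \<Rightarrow> 'a"
  assumes "cornish_space T le Fp Fm ops"
  shows "(\<exists>\<Phi>. bij_betw \<Phi> (E_Con T le Fp Fm ops) (closed_subs T Fp Fm ops) \<and>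
            (\<forall>\<theta>\<in>E_Con T le Fp Fm ops. \<forall>\<psi>\<in>E_Con T le Fp Fm ops.
               \<theta> \<subseteq> \<psi> \<longleftrightarrow> \<Phi> \<psi> \<subseteq> \<Phi> \<theta>))
       \<and> (E_simple T le Fp Fm ops \<longleftrightarrow>
            (\<forall>S\<in>closed_subs T Fp Fm ops. S = {} \<or> S = topspace T))"
proof -
  let ?Con = "E_Con T le Fp Fm ops" and ?Sub = "closed_subs T Fp Fm ops"
  have "compact_space T"
    using assms by (simp add: cornish_space_def priestley_space_def)
  then have anti: "\<theta> \<subseteq> \<psi> \<longleftrightarrow> agreement_set T \<psi> \<subseteq> agreement_set T \<theta>"
    if "\<theta> \<in> ?Con" "\<psi> \<in> ?Con" for \<theta> \<psi>
    using agreement_set_antimono agreement_con_antimono agreement_con_agreement_set that by metis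
  have extremes: "{topspace T, {}} \<subseteq> ?Sub"
    by (simp add: closed_subs_def cornish_space_ops_topspace[OF assms])
  note bij_inv = agreement_bij_betw(2)[OF assms]
  have "E_simple T le Fp Fm ops \<longleftrightarrow> agreement_con T le ` ?Sub = agreement_con T le ` {topspace T, {}}"
    using bij_betw_imp_surj_on[OF bij_inv]
    by (simp add: E_simple_def agreement_con_topspace agreement_con_empty)
  also have "\<dots> \<longleftrightarrow> ?Sub = {topspace T, {}}"
    using inj_on_image_eq_iff[OF bij_betw_imp_inj_on[OF bij_inv] subset_refl extremes] .
  also have "\<dots> \<longleftrightarrow> (\<forall>S\<in>?Sub. S = {} \<or> S = topspace T)"
    using extremes by auto
  finally show ?thesis
    using agreement_bij_betw(1)[OF assms] anti by (intro conjI exI[of _ "agreement_set T"]) simp_all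
qed

end
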